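(* Let $g\geq 2$. For pairwise distinct $\alpha,\beta,\gamma\in\{a_1,\dots,a_g,b_1,\dots,b_g\}$, the family $V_{\alpha,\beta,\gamma}=((V_{\alpha,\beta,\gamma})_c)_c\in\mathfrak t_{(g)}(2)^{\times 2g}$ defined by \[ (V_{\alpha,\beta,\gamma})_c=\begin{cases} -\langle\alpha,\alpha^*\rangle\big([z_\beta^{(1)},z_\gamma^{(1)}]+2\langle\beta,\gamma\rangle t_{11}\big) & c=\alpha^*,\\ \langle\beta,\beta^*\rangle\big([z_\alpha^{(1)},z_\gamma^{(1)}]+2\langle\alpha,\gamma\rangle t_{11}\big) & c=\beta^*,\\ -\langle\gamma,\gamma^*\rangle\big([z_\alpha^{(1)},z_\beta^{(1)}]+2\langle\alpha,\beta\rangle t_{11}\big) & c=\gamma^*,\\ 0 & \text{otherwise} \end{cases} \] lies in $Z_{(g)}$.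
   Context: $\mathbb K$ is a field of characteristic zero. On $\{a_1,\dots,a_g,b_1,\dots,b_g\}$ the pairing is $\langle a_i,b_i\rangle=-\langle b_i,a_i\rangle=-1$ and zero on other pairs; the Poincaré dual is $a_i^*=b_i$, $b_i^*=a_i$. For $c\in\{a_i,b_i\}$, $z_c^{(1)}\in\mathfrak t_{(g)}(2)$ denotes $x_i^{(1)}$ if $c=a_i$ and $y_i^{(1)}$ if $c=b_i$. For $n\ge1$, $\mathfrak t_{(g)}(n)$ is the Lie algebra generated by $x_l^{(i)},y_l^{(i)},t_{ij}$ ($1\le i,j\le n$, $1\le l\le g$) with relations: all $t_{ii}$ central; $t_{ij}=t_{ji}$; $[t_{ij},t_{kl}]=0$ for $i,j,k,l$ distinct; $[t_{ik}+t_{kj},t_{ij}]=0$ for $i,j,k$ distinct; $[x_l^{(i)},x_k^{(j)}]=[y_l^{(i)},y_k^{(j)}]=0$ for $i\ne j$; $[x_k^{(i)},y_l^{(j)}]=0$ for $i\neq j,k\neq l$; $[x_k^{(i)},y_k^{(j)}]=t_{ij}$ for $i\neq j$; $\sum_{k=1}^g[x_k^{(i)},y_k^{(i)}]=-\sum_{j\neq i}t_{ij}-(2-2g)t_{ii}$. For $\phi:\{1,\dots,m\}\to\{1,\dots,n\}$, $\theta\mapsto\theta^\phi$ is the Lie morphism with $t_{ij}\mapsto\sum_{i'\in\phi^{-1}(i),j'\in\phi^{-1}(j)}t_{i'j'}$ ($i\ne j$), $t_{ii}\mapsto\sum_{i'\in\phi^{-1}(i)}t_{i'i'}+\frac12\sum_{i'\ne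 j'\in\phi^{-1}(i)}t_{i'j'}$, $x_l^{(i)}\mapsto\sum_{i'\in\phi^{-1}(i)}x_l^{(i')}$, $y_l^{(i)}\mapsto\sum_{i'\in\phi^{-1}(i)}y_l^{(i')}$, written $\theta^{I_1,\dots,I_n}$ with $I_k=\phi^{-1}(k)$. $Z_{(g)}$ is the set of families $(U_c)_{c}\in\mathfrak t_{(g)}(2)^{\times 2g}$, $c\in\{a_1,\dots,b_g\}$, such that: for every $c$ there is $u_c\in\mathfrak t_{(g)}(1)$ with $u_c^{12}=U_c^{1,2}+U_c^{2,1}$; $U_c^{12,3}-U_c^{1,23}-U_c^{2,13}=0$ for all $c$; $[U_{a_i}^{1,23},y_j^{(2)}]-[U_{b_j}^{2,13},x_i^{(1)}]=0$ for all $i,j$; for $i<j$, $[U_{a_i}^{1,23},x_j^{(2)}]-[U_{a_j}^{2,13},x_i^{(1)}]=0$ and $[U_{b_i}^{1,23},y_j^{(2)}]-[U_{b_j}^{2,13},y_i^{(1)}]=0$; $\sum_{i=1}^g[U_{a_i}^{1,23},y_i^{(1)}]-[U_{b_i}^{1,23},x_i^{(1)}]=0$. *)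

theory Defs
  imports Main
begin

text \<open>Generators: Xg l i = x_l^(i), Yg l i = y_l^(i), Tg i j = t_ij (indices 1-based).\<close>
datatype gen = Xg nat nat | Yg nat nat | Tg nat nat

datatype 'k lie = Gen gen | Zero | Add "'k lie" "'k lie" | Smul 'k "'k lie" | Br "'k lie" "'k lie"

definition Neg :: "'k::field lie \<Rightarrow> 'k lie" where "Neg x = Smul (-1) x"
definition Sub :: "'k::field lie \<Rightarrow> 'k lie \<Rightarrow> 'k lie" where "Sub x y = Add x (Neg y)"
definition lsum :: "'k lie list \<Rightarrow> 'k lie" where "lsum xs = foldr Add xs Zero"

fun valid_gen :: "nat \<Rightarrow> nat \<Rightarrow> gen \<Rightarrow> bool" where
  "valid_gen g n (Xg l i) = (l \<in> {1..g} \<and> i \<in> {1..n})"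
| "valid_gen g n (Yg l i) = (l \<in> {1..g} \<and> i \<in> {1..n})"
| "valid_gen g n (Tg i j) = (i \<in> {1..n} \<and> j \<in> {1..n})"

fun gens :: "'k lie \<Rightarrow> gen set" where
  "gens (Gen a) = {a}"
| "gens Zero = {}"
| "gens (Add x y) = gens x \<union> gens y"
| "gens (Smul c x) = gens x"
| "gens (Br x y) = gens x \<union> gens y"

text \<open>t \<in> t_(g)(n): only valid generators occur.\<close>
definition wf :: "nat \<Rightarrow> nat \<Rightarrow> 'k lie \<Rightarrow> bool" where
  "wf g n t = (\<forall>a\<in>gens t. valid_gen g n a)"

abbreviation X :: "nat \<Rightarrow> nat \<Rightarrow> 'k lie" where "X l i \<equiv> Gen (Xg l i)"
abbreviation Y :: "nat \<Rightarrow> nat \<Rightarrow> 'k lie" where "Y l i \<equiv> Gen (Yg l i)"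
abbreviation T :: "nat \<Rightarrow> nat \<Rightarrow> 'k lie" where "T i j \<equiv> Gen (Tg i j)"

definition is_rel :: "nat \<Rightarrow> nat \<Rightarrow> 'k::field lie \<Rightarrow> bool" where
  "is_rel g n r \<longleftrightarrow>
     (\<exists>i a. i \<in> {1..n} \<and> valid_gen g n a \<and> r = Br (T i i) (Gen a))
   \<or> (\<exists>i j. i \<in> {1..n} \<and> j \<in> {1..n} \<and> r = Sub (T i j) (T j i))
   \<or> (\<exists>i j k l. i \<in> {1..n} \<and> j \<in> {1..n} \<and> k \<in> {1..n} \<and> l \<in> {1..n}
        \<and> distinct [i,j,k,l] \<and> r = Br (T i j) (T k l))
   \<or> (\<exists>i j k. i \<in> {1..n} \<and> j \<in> {1..n} \<and> k \<in> {1..n}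
        \<and> distinct [i,j,k] \<and> r = Br (Add (T i k) (T k j)) (T i j))
   \<or> (\<exists>i j l k. i \<in> {1..n} \<and> j \<in> {1..n} \<and> l \<in> {1..g} \<and> k \<in> {1..g} \<and> i \<noteq> j
        \<and> (r = Br (X l i) (X k j) \<or> r = Br (Y l i) (Y k j)))
   \<or> (\<exists>i j l k. i \<in> {1..n} \<and> j \<in> {1..n} \<and> l \<in> {1..g} \<and> k \<in> {1..g} \<and> i \<noteq> j
        \<and> k \<noteq> l \<and> r = Br (X k i) (Y l j))
   \<or> (\<exists>i j k. i \<in> {1..n} \<and> j \<in> {1..n} \<and> k \<in> {1..g} \<and> i \<noteq> j
        \<and> r = Sub (Br (X k i) (Y k j)) (T i j))
   \<or> (\<exists>i. i \<in> {1..n} \<and>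
        r = Add (lsum (map (\<lambda>k. Br (X k i) (Y k i)) [1..<g+1]))
                (Add (lsum (map (\<lambda>j. T i j) (filter (\<lambda>j. j \<noteq> i) [1..<n+1])))
                     (Smul (2 - 2 * of_nat g) (T i i))))"

text \<open>The quotient of formal expressions by this relation is the Lie algebra over K
  presented by the generators and relations.\<close>
inductive lie_eq :: "nat \<Rightarrow> nat \<Rightarrow> 'k::field lie \<Rightarrow> 'k lie \<Rightarrow> bool" for g n where
  refl: "lie_eq g n x x"
| sym: "lie_eq g n x y \<Longrightarrow> lie_eq g n y x"
| trans: "lie_eq g n x y \<Longrightarrow> lie_eq g n y z \<Longrightarrow> lie_eq g n x z"
| cong_add: "lie_eq g n x x' \<Longrightarrow> lie_eq g n y y' \<Longrightarrow> lie_eq g n (Add x y) (Add x' y')"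
| cong_smul: "lie_eq g n x x' \<Longrightarrow> lie_eq g n (Smul c x) (Smul c x')"
| cong_br: "lie_eq g n x x' \<Longrightarrow> lie_eq g n y y' \<Longrightarrow> lie_eq g n (Br x y) (Br x' y')"
| add_assoc: "lie_eq g n (Add (Add x y) z) (Add x (Add y z))"
| add_comm: "lie_eq g n (Add x y) (Add y x)"
| add_zero: "lie_eq g n (Add x Zero) x"
| add_neg: "lie_eq g n (Add x (Smul (-1) x)) Zero"
| smul_add: "lie_eq g n (Smul c (Add x y)) (Add (Smul c x) (Smul c y))"
| add_smul: "lie_eq g n (Smul (c + d) x) (Add (Smul c x) (Smul d x))"
| smul_smul: "lie_eq g n (Smul c (Smul d x)) (Smul (c * d) x)"
| smul_one: "lie_eq g n (Smul 1 x) x"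
| br_add_l: "lie_eq g n (Br (Add x y) z) (Add (Br x z) (Br y z))"
| br_add_r: "lie_eq g n (Br z (Add x y)) (Add (Br z x) (Br z y))"
| br_smul_l: "lie_eq g n (Br (Smul c x) y) (Smul c (Br x y))"
| br_smul_r: "lie_eq g n (Br x (Smul c y)) (Smul c (Br x y))"
| br_alt: "lie_eq g n (Br x x) Zero"
| jacobi: "lie_eq g n (Add (Br x (Br y z)) (Add (Br y (Br z x)) (Br z (Br x y)))) Zero"
| rel: "is_rel g n r \<Longrightarrow> lie_eq g n r Zero"

abbreviation lie_zero :: "nat \<Rightarrow> nat \<Rightarrow> 'k::field lie \<Rightarrow> bool" where
  "lie_zero g n x \<equiv> lie_eq g n x Zero"

definition preim :: "nat \<Rightarrow> (nat \<Rightarrow> nat) \<Rightarrow> nat \<Rightarrow> nat list" where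
  "preim m \<phi> i = filter (\<lambda>i'. \<phi> i' = i) [1..<m+1]"

fun pull :: "nat \<Rightarrow> (nat \<Rightarrow> nat) \<Rightarrow> gen \<Rightarrow> 'k::field lie" where
  "pull m \<phi> (Xg l i) = lsum (map (\<lambda>i'. X l i') (preim m \<phi> i))"
| "pull m \<phi> (Yg l i) = lsum (map (\<lambda>i'. Y l i') (preim m \<phi> i))"
| "pull m \<phi> (Tg i j) =
     (if i \<noteq> j then lsum [T i' j'. i' \<leftarrow> preim m \<phi> i, j' \<leftarrow> preim m \<phi> j]
      else Add (lsum [T i' i'. i' \<leftarrow> preim m \<phi> i])
               (Smul (1/2) (lsum [T i' j'. i' \<leftarrow> preim m \<phi> i, j' \<leftarrow> preim m \<phi> i, i' \<noteq> j'])))"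

fun subst :: "(gen \<Rightarrow> 'k lie) \<Rightarrow> 'k lie \<Rightarrow> 'k lie" where
  "subst f (Gen a) = f a"
| "subst f Zero = Zero"
| "subst f (Add x y) = Add (subst f x) (subst f y)"
| "subst f (Smul c x) = Smul c (subst f x)"
| "subst f (Br x y) = Br (subst f x) (subst f y)"

definition up :: "nat \<Rightarrow> (nat \<Rightarrow> nat) \<Rightarrow> 'k::field lie \<Rightarrow> 'k lie" where
  "up m \<phi> \<theta> = subst (pull m \<phi>) \<theta>"

definition sup_1_2 :: "'k::field lie \<Rightarrow> 'k lie" where "sup_1_2 = up 2 (\<lambda>i. i)"
definition sup_2_1 :: "'k::field lie \<Rightarrow> 'k lie" where "sup_2_1 = up 2 (\<lambda>i. if i = 1 then 2 else 1)"
definition sup_12 :: "'k::field lie \<Rightarrow> 'k lie" where "sup_12 = up 2 (\<lambda>i. 1)"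
definition sup_12_3 :: "'k::field lie \<Rightarrow> 'k lie" where "sup_12_3 = up 3 (\<lambda>i. if i \<le> 2 then 1 else 2)"
definition sup_1_23 :: "'k::field lie \<Rightarrow> 'k lie" where "sup_1_23 = up 3 (\<lambda>i. if i = 1 then 1 else 2)"
definition sup_2_13 :: "'k::field lie \<Rightarrow> 'k lie" where "sup_2_13 = up 3 (\<lambda>i. if i = 2 then 1 else 2)"

datatype cls = A nat | B nat

definition cls_set :: "nat \<Rightarrow> cls set" where
  "cls_set g = A ` {1..g} \<union> B ` {1..g}"

fun pair :: "cls \<Rightarrow> cls \<Rightarrow> int" where
  "pair (A i) (B j) = (if i = j then -1 else 0)"
| "pair (B i) (A j) = (if i = j then 1 else 0)"
| "pair _ _ = 0"

fun dual :: "cls \<Rightarrow> cls" where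
  "dual (A i) = B i"
| "dual (B i) = A i"

fun z1 :: "cls \<Rightarrow> 'k lie" where
  "z1 (A i) = X i 1"
| "z1 (B i) = Y i 1"

definition in_Z :: "nat \<Rightarrow> (cls \<Rightarrow> 'k::field lie) \<Rightarrow> bool" where
  "in_Z g U \<longleftrightarrow>
     (\<forall>c\<in>cls_set g. wf g 2 (U c))
   \<and> (\<forall>c\<in>cls_set g. \<exists>u. wf g 1 u \<and>
        lie_eq g 2 (sup_12 u) (Add (sup_1_2 (U c)) (sup_2_1 (U c))))
   \<and> (\<forall>c\<in>cls_set g. lie_zero g 3
        (Sub (Sub (sup_12_3 (U c)) (sup_1_23 (U c))) (sup_2_13 (U c))))
   \<and> (\<forall>i\<in>{1..g}. \<forall>j\<in>{1..g}. lie_zero g 3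
        (Sub (Br (sup_1_23 (U (A i))) (Y j 2)) (Br (sup_2_13 (U (B j))) (X i 1))))
   \<and> (\<forall>i\<in>{1..g}. \<forall>j\<in>{1..g}. i < j \<longrightarrow>
        lie_zero g 3 (Sub (Br (sup_1_23 (U (A i))) (X j 2)) (Br (sup_2_13 (U (A j))) (X i 1)))
      \<and> lie_zero g 3 (Sub (Br (sup_1_23 (U (B i))) (Y j 2)) (Br (sup_2_13 (U (B j))) (Y i 1))))
   \<and> lie_zero g 3 (lsum (map (\<lambda>i. Sub (Br (sup_1_23 (U (A i))) (Y i 1))
                                      (Br (sup_1_23 (U (B i))) (X i 1))) [1..<g+1]))"

definition V :: "cls \<Rightarrow> cls \<Rightarrow> cls \<Rightarrow> cls \<Rightarrow> 'k::field lie" where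
  "V \<alpha> \<beta> \<gamma> c =
    (if c = dual \<alpha> then
       Smul (- of_int (pair \<alpha> (dual \<alpha>)))
            (Add (Br (z1 \<beta>) (z1 \<gamma>)) (Smul (2 * of_int (pair \<beta> \<gamma>)) (T 1 1)))
     else if c = dual \<beta> then
       Smul (of_int (pair \<beta> (dual \<beta>)))
            (Add (Br (z1 \<alpha>) (z1 \<gamma>)) (Smul (2 * of_int (pair \<alpha> \<gamma>)) (T 1 1)))
     else if c = dual \<gamma> then
       Smul (- of_int (pair \<gamma> (dual \<gamma>)))
            (Add (Br (z1 \<alpha>) (z1 \<beta>)) (Smul (2 * of_int (pair \<alpha> \<beta>)) (T 1 1)))
     else Zero)"

end

theory Submission
  imports Defs
begin

(* Each V_c is a combination of the elements W p q = [z_p^(1), z_q^(1)] + 2<p,q> t_11, with the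
   coefficients <c,alpha>, -<c,beta>, <c,gamma> of the contraction of c with alpha^beta^gamma.
   Hence every condition defining Z_(g) reduces to identities for W and its images under the
   coface maps.  As t_11 is central, these follow from three facts about generators at
   different points: [z_p^(i), z_r^(j)] = <r,p> t_ij, [z^(i), t_jk] = 0 (this needs a second
   handle, i.e. g >= 2), and [t_12, z^(2)] = -[t_12, z^(1)], obtained by bracketing the defining
   relation at point 2 with z^(1).  With them, the bracket conditions become the antisymmetry
   in r, r' of the double contraction of r, r' with alpha^beta^gamma, and the last condition
   becomes the Jacobi identity for z_alpha, z_beta, z_gamma after expanding in the symplectic
   basis. *)

declare lie_eq.trans [trans] and lie_eq.jacobi [simp]

lemma lie_eq_smul_0: "lie_eq g n (Smul 0 x) Zero"
proof -
  let ?y = "Smul 0 x"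
  have double: "lie_eq g n ?y (Add ?y ?y)"
    using lie_eq.add_smul[of g n 0 0 x] by simp
  have "lie_eq g n Zero (Add ?y (Smul (-1) ?y))"
    by (rule lie_eq.sym[OF lie_eq.add_neg])
  also have "lie_eq g n ... (Add (Add ?y ?y) (Smul (-1) ?y))"
    by (intro lie_eq.cong_add double lie_eq.refl)
  also have "lie_eq g n ... (Add ?y (Add ?y (Smul (-1) ?y)))"
    by (rule lie_eq.add_assoc)
  also have "lie_eq g n ... (Add ?y Zero)"
    by (intro lie_eq.cong_add lie_eq.refl lie_eq.add_neg)
  also have "lie_eq g n ... ?y"
    by (rule lie_eq.add_zero)
  finally show ?thesis
    by (rule lie_eq.sym)
qed

lemma lie_eq_smul_Zero: "lie_eq g n (Smul c Zero) Zero"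
proof -
  have "lie_eq g n (Smul c Zero) (Smul c (Smul 0 Zero))"
    by (intro lie_eq.cong_smul lie_eq.sym[OF lie_eq_smul_0])
  also have "lie_eq g n ... (Smul 0 Zero)"
    using lie_eq.smul_smul[of g n c 0 Zero] by simp
  also have "lie_eq g n ... Zero"
    by (rule lie_eq_smul_0)
  finally show ?thesis .
qed

lemma lie_eq_Zero_add: "lie_eq g n (Add Zero x) x"
  by (rule lie_eq.trans[OF lie_eq.add_comm lie_eq.add_zero])

lemma lie_eq_add_left_commute: "lie_eq g n (Add x (Add y z)) (Add y (Add x z))"
proof -
  have "lie_eq g n (Add x (Add y z)) (Add (Add x y) z)"
    by (rule lie_eq.sym[OF lie_eq.add_assoc])
  also have "lie_eq g n ... (Add (Add y x) z)"
    by (intro lie_eq.cong_add lie_eq.add_comm lie_eq.refl)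
  also have "lie_eq g n ... (Add y (Add x z))"
    by (rule lie_eq.add_assoc)
  finally show ?thesis .
qed

lemma lie_eq_add_middle_swap: "lie_eq g n (Add (Add w x) (Add y z)) (Add (Add w y) (Add x z))"
proof -
  have "lie_eq g n (Add (Add w x) (Add y z)) (Add w (Add x (Add y z)))"
    by (rule lie_eq.add_assoc)
  also have "lie_eq g n ... (Add w (Add y (Add x z)))"
    by (intro lie_eq.cong_add lie_eq.refl lie_eq_add_left_commute)
  also have "lie_eq g n ... (Add (Add w y) (Add x z))"
    by (rule lie_eq.sym[OF lie_eq.add_assoc])
  finally show ?thesis .
qed

lemma lie_eq_br_Zero_left: "lie_eq g n (Br Zero y) Zero"
proof -
  have "lie_eq g n (Br Zero y) (Br (Smul 0 Zero) y)"
    by (intro lie_eq.cong_br lie_eq.sym[OF lie_eq_smul_0] lie_eq.refl)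
  also have "lie_eq g n ... (Smul 0 (Br Zero y))"
    by (rule lie_eq.br_smul_l)
  also have "lie_eq g n ... Zero"
    by (rule lie_eq_smul_0)
  finally show ?thesis .
qed

lemma lie_eq_br_Zero_right: "lie_eq g n (Br y Zero) Zero"
proof -
  have "lie_eq g n (Br y Zero) (Br y (Smul 0 Zero))"
    by (intro lie_eq.cong_br lie_eq.sym[OF lie_eq_smul_0] lie_eq.refl)
  also have "lie_eq g n ... (Smul 0 (Br y Zero))"
    by (rule lie_eq.br_smul_r)
  also have "lie_eq g n ... Zero"
    by (rule lie_eq_smul_0)
  finally show ?thesis .
qed

lemma lie_eq_br_smul_smul: "lie_eq g n (Br (Smul c x) (Smul d y)) (Smul (c * d) (Br x y))"
proof -
  have "lie_eq g n (Br (Smul c x) (Smul d y)) (Smul c (Br x (Smul d y)))"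
    by (rule lie_eq.br_smul_l)
  also have "lie_eq g n ... (Smul c (Smul d (Br x y)))"
    by (intro lie_eq.cong_smul lie_eq.br_smul_r)
  also have "lie_eq g n ... (Smul (c * d) (Br x y))"
    by (rule lie_eq.smul_smul)
  finally show ?thesis .
qed

lemma lie_zero_add [simp]: "lie_zero g n x \<Longrightarrow> lie_zero g n y \<Longrightarrow> lie_zero g n (Add x y)"
  by (rule lie_eq.trans[OF lie_eq.cong_add lie_eq.add_zero])

lemma lie_zero_smul [simp]: "lie_zero g n x \<Longrightarrow> lie_zero g n (Smul c x)"
  by (rule lie_eq.trans[OF lie_eq.cong_smul lie_eq_smul_Zero])

lemma lie_zero_br_left [simp]: "lie_zero g n x \<Longrightarrow> lie_zero g n (Br x y)"
  by (rule lie_eq.trans[OF lie_eq.cong_br[OF _ lie_eq.refl] lie_eq_br_Zero_left])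

lemma lie_zero_br_right [simp]: "lie_zero g n y \<Longrightarrow> lie_zero g n (Br x y)"
  by (rule lie_eq.trans[OF lie_eq.cong_br[OF lie_eq.refl] lie_eq_br_Zero_right])

lemma lie_zero_SubI [simp]: "lie_eq g n x y \<Longrightarrow> lie_zero g n (Sub x y)"
  unfolding Sub_def Neg_def
  by (rule lie_eq.trans[OF lie_eq.cong_add[OF _ lie_eq.refl] lie_eq.add_neg])

lemma lie_zero_br_antisym [simp]: "lie_zero g n (Add (Br x y) (Br y x))"
proof -
  have "lie_eq g n Zero (Br (Add x y) (Add x y))"
    by (rule lie_eq.sym[OF lie_eq.br_alt])
  also have "lie_eq g n ... (Add (Br x (Add x y)) (Br y (Add x y)))"
    by (rule lie_eq.br_add_l)
  also have "lie_eq g n ... (Add (Add (Br x x) (Br x y)) (Add (Br y x) (Br y y)))"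
    by (intro lie_eq.cong_add lie_eq.br_add_r)
  also have "lie_eq g n ... (Add (Add Zero (Br x y)) (Add (Br y x) Zero))"
    by (intro lie_eq.cong_add lie_eq.br_alt lie_eq.refl)
  also have "lie_eq g n ... (Add (Br x y) (Br y x))"
    by (intro lie_eq.cong_add lie_eq_Zero_add lie_eq.add_zero)
  finally show ?thesis
    by (rule lie_eq.sym)
qed

lemma lsum_Nil [simp]: "lsum [] = Zero"
  by (simp add: lsum_def)

lemma lsum_Cons [simp]: "lsum (x # xs) = Add x (lsum xs)"
  by (simp add: lsum_def)

lemma lie_eq_lsum_append: "lie_eq g n (lsum (xs @ ys)) (Add (lsum xs) (lsum ys))"
proof (induction xs)
  case Nil
  then show ?case by (simp add: lie_eq.sym[OF lie_eq_Zero_add])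
next
  case (Cons x xs)
  have "lie_eq g n (lsum ((x # xs) @ ys)) (Add x (Add (lsum xs) (lsum ys)))"
    using Cons.IH by (simp add: lie_eq.cong_add lie_eq.refl)
  also have "lie_eq g n ... (Add (lsum (x # xs)) (lsum ys))"
    by (simp add: lie_eq.sym[OF lie_eq.add_assoc])
  finally show ?case .
qed

lemma lie_eq_lsum_concat: "lie_eq g n (lsum (concat xss)) (lsum (map lsum xss))"
proof (induction xss)
  case Nil
  then show ?case by (simp add: lie_eq.refl)
next
  case (Cons xs xss)
  have "lie_eq g n (lsum (concat (xs # xss))) (Add (lsum xs) (lsum (concat xss)))"
    by (simp add: lie_eq_lsum_append)
  also have "lie_eq g n ... (lsum (map lsum (xs # xss)))"
    using Cons.IH by (simp add: lie_eq.cong_add lie_eq.refl)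
  finally show ?case .
qed

lemma lie_eq_lsum_cong:
  "(\<And>x. x \<in> set xs \<Longrightarrow> lie_eq g n (f x) (h x)) \<Longrightarrow> lie_eq g n (lsum (map f xs)) (lsum (map h xs))"
  by (induction xs) (auto intro: lie_eq.cong_add lie_eq.refl)

lemma lie_eq_br_lsum_left: "lie_eq g n (Br (lsum (map f xs)) y) (lsum (map (\<lambda>x. Br (f x) y) xs))"
  by (induction xs)
     (auto intro: lie_eq_br_Zero_left lie_eq.trans[OF lie_eq.br_add_l] lie_eq.cong_add lie_eq.refl)

lemma lie_eq_br_lsum_right: "lie_eq g n (Br y (lsum (map f xs))) (lsum (map (\<lambda>x. Br y (f x)) xs))"
  by (induction xs)
     (auto intro: lie_eq_br_Zero_right lie_eq.trans[OF lie_eq.br_add_r] lie_eq.cong_add lie_eq.refl)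

lemma lie_zero_lsum: "list_all (lie_zero g n) xs \<Longrightarrow> lie_zero g n (lsum xs)"
  by (induction xs) (auto intro: lie_eq.refl)

lemma lie_eq_lsum_single:
  "distinct L \<Longrightarrow> k \<in> set L \<Longrightarrow> (\<And>l. l \<in> set L \<Longrightarrow> l \<noteq> k \<Longrightarrow> lie_zero g n (F l)) \<Longrightarrow>
   lie_eq g n (lsum (map F L)) (F k)"
proof (induction L)
  case Nil
  then show ?case by simp
next
  case (Cons a L)
  show ?case
  proof (cases "a = k")
    case True
    with Cons.prems have "lie_zero g n (lsum (map F L))"
      by (intro lie_zero_lsum) (auto simp: list_all_iff)
    then have "lie_eq g n (lsum (map F (a # L))) (Add (F k) Zero)"
      using True by (simp add: lie_eq.cong_add lie_eq.refl)
    then show ?thesis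
      by (rule lie_eq.trans[OF _ lie_eq.add_zero])
  next
    case False
    with Cons have "lie_eq g n (lsum (map F (a # L))) (Add Zero (F k))"
      by (simp add: lie_eq.cong_add)
    then show ?thesis
      by (rule lie_eq.trans[OF _ lie_eq_Zero_add])
  qed
qed

lemma lie_eq_lsum_add:
  "lie_eq g n (lsum (map (\<lambda>i. Add (f i) (h i)) L)) (Add (lsum (map f L)) (lsum (map h L)))"
proof (induction L)
  case Nil
  then show ?case by (simp add: lie_eq.sym[OF lie_eq.add_zero])
next
  case (Cons a L)
  then show ?case
    by (simp add: lie_eq.trans[OF lie_eq.cong_add[OF lie_eq.refl Cons.IH] lie_eq_add_middle_swap])
qed

lemma lie_eq_lsum_smul: "lie_eq g n (lsum (map (\<lambda>i. Smul c (f i)) L)) (Smul c (lsum (map f L)))"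
proof (induction L)
  case Nil
  then show ?case by (simp add: lie_eq.sym[OF lie_eq_smul_Zero])
next
  case (Cons a L)
  then show ?case
    by (simp add: lie_eq.trans[OF lie_eq.cong_add[OF lie_eq.refl Cons.IH] lie_eq.sym[OF lie_eq.smul_add]])
qed

section \<open>Coefficients in the free algebra\<close>

text \<open>\<open>lie_coeff e a\<close> is the coefficient of the bracket monomial \<open>a\<close> in the multilinear
  expansion of \<open>e\<close>, computed without any identity of the Lie algebra. Two expressions whose
  difference has the same coefficients as a combination of known relators are therefore equal
  modulo the relations, and \<open>simp\<close> can check the coefficients.\<close>

fun lie_coeff :: "'k::field lie \<Rightarrow> 'k lie \<Rightarrow> 'k" where
  "lie_coeff (Gen v) a = (if a = Gen v then 1 else 0)"
| "lie_coeff Zero a = 0"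
| "lie_coeff (Add x y) a = lie_coeff x a + lie_coeff y a"
| "lie_coeff (Smul c x) a = c * lie_coeff x a"
| "lie_coeff (Br x y) a = (case a of Br a1 a2 \<Rightarrow> lie_coeff x a1 * lie_coeff y a2 | _ \<Rightarrow> 0)"

fun lie_monos :: "'k lie \<Rightarrow> 'k lie list" where
  "lie_monos (Gen v) = [Gen v]"
| "lie_monos Zero = []"
| "lie_monos (Add x y) = lie_monos x @ lie_monos y"
| "lie_monos (Smul c x) = lie_monos x"
| "lie_monos (Br x y) = [Br a b. a \<leftarrow> lie_monos x, b \<leftarrow> lie_monos y]"

lemma lie_coeff_Sub [simp]: "lie_coeff (Sub x y) a = lie_coeff x a - lie_coeff y a"
  by (simp add: Sub_def Neg_def)

lemma lie_monos_Sub [simp]: "lie_monos (Sub x y) = lie_monos x @ lie_monos y"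
  by (simp add: Sub_def Neg_def)

lemma lie_coeff_eq_0: "a \<notin> set (lie_monos e) \<Longrightarrow> lie_coeff e a = 0"
  by (induction e arbitrary: a) (auto split: lie.splits)

definition lincomb :: "'k::field lie list \<Rightarrow> ('k lie \<Rightarrow> 'k) \<Rightarrow> 'k lie" where
  "lincomb L f = lsum (map (\<lambda>a. Smul (f a) a) L)"

lemma lincomb_Nil [simp]: "lincomb [] f = Zero"
  by (simp add: lincomb_def)

lemma lincomb_Cons [simp]: "lincomb (a # L) f = Add (Smul (f a) a) (lincomb L f)"
  by (simp add: lincomb_def)

lemma lincomb_add: "lie_eq g n (Add (lincomb L f) (lincomb L h)) (lincomb L (\<lambda>a. f a + h a))"
proof (induction L)
  case Nil
  then show ?case by (simp add: lie_eq.add_zero)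
next
  case (Cons a L)
  have "lie_eq g n (Add (lincomb (a # L) f) (lincomb (a # L) h))
     (Add (Add (Smul (f a) a) (Smul (h a) a)) (Add (lincomb L f) (lincomb L h)))"
    by (simp add: lie_eq_add_middle_swap)
  also have "lie_eq g n ... (lincomb (a # L) (\<lambda>a. f a + h a))"
    by (simp add: lie_eq.cong_add Cons.IH lie_eq.sym[OF lie_eq.add_smul])
  finally show ?case .
qed

lemma lincomb_smul: "lie_eq g n (Smul c (lincomb L f)) (lincomb L (\<lambda>a. c * f a))"
proof (induction L)
  case Nil
  then show ?case by (simp add: lie_eq_smul_Zero)
next
  case (Cons a L)
  have "lie_eq g n (Smul c (lincomb (a # L) f)) (Add (Smul c (Smul (f a) a)) (Smul c (lincomb L f)))"
    by (simp add: lie_eq.smul_add)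
  also have "lie_eq g n ... (lincomb (a # L) (\<lambda>a. c * f a))"
    by (simp add: lie_eq.cong_add Cons.IH lie_eq.smul_smul)
  finally show ?case .
qed

lemma lincomb_filter:
  "(\<And>a. a \<in> set L \<Longrightarrow> \<not> P a \<Longrightarrow> f a = 0) \<Longrightarrow> lie_eq g n (lincomb L f) (lincomb (filter P L) f)"
proof (induction L)
  case Nil
  then show ?case by (simp add: lie_eq.refl)
next
  case (Cons a L)
  then have IH: "lie_eq g n (lincomb L f) (lincomb (filter P L) f)"
    by simp
  show ?case
  proof (cases "P a")
    case True
    then show ?thesis using IH by (simp add: lie_eq.cong_add lie_eq.refl)
  next
    case False
    with Cons.prems have "lie_eq g n (lincomb (a # L) f) (Add Zero (lincomb L f))"
      by (simp add: lie_eq.cong_add lie_eq.refl lie_eq_smul_0)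
    also have "lie_eq g n ... (lincomb (filter P (a # L)) f)"
      using False IH by (simp add: lie_eq.trans[OF lie_eq_Zero_add])
    finally show ?thesis .
  qed
qed

lemma lincomb_move: "lie_eq g n (lincomb (P @ a # S) f) (Add (Smul (f a) a) (lincomb (P @ S) f))"
proof (induction P)
  case Nil
  then show ?case by (simp add: lie_eq.refl)
next
  case (Cons b P)
  have "lie_eq g n (lincomb ((b # P) @ a # S) f)
      (Add (Smul (f b) b) (Add (Smul (f a) a) (lincomb (P @ S) f)))"
    using Cons.IH by (simp add: lie_eq.cong_add lie_eq.refl)
  also have "lie_eq g n ... (Add (Smul (f a) a) (lincomb ((b # P) @ S) f))"
    by (simp add: lie_eq_add_left_commute)
  finally show ?case .
qed

lemma lincomb_perm:
  "distinct L1 \<Longrightarrow> distinct L2 \<Longrightarrow> set L1 = set L2 \<Longrightarrow> lie_eq g n (lincomb L1 f) (lincomb L2 f)"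
proof (induction L1 arbitrary: L2)
  case Nil
  then show ?case by (simp add: lie_eq.refl)
next
  case (Cons a L1)
  then obtain P S where L2: "L2 = P @ a # S"
    by (metis list.set_intros(1) split_list)
  with Cons.prems have "lie_eq g n (lincomb L1 f) (lincomb (P @ S) f)"
    by (intro Cons.IH) auto
  then have "lie_eq g n (lincomb (a # L1) f) (Add (Smul (f a) a) (lincomb (P @ S) f))"
    by (simp add: lie_eq.cong_add lie_eq.refl)
  also have "lie_eq g n ... (lincomb L2 f)"
    unfolding L2 by (rule lie_eq.sym[OF lincomb_move])
  finally show ?case .
qed

lemma lincomb_ext:
  assumes "distinct L1" "distinct L2" "set L1 \<subseteq> set L2" "\<And>a. a \<in> set L2 - set L1 \<Longrightarrow> f a = 0"
  shows "lie_eq g n (lincomb L1 f) (lincomb L2 f)"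
proof -
  have "lie_eq g n (lincomb L1 f) (lincomb (filter (\<lambda>a. a \<in> set L1) L2) f)"
    using assms by (intro lincomb_perm) auto
  also have "lie_eq g n ... (lincomb L2 f)"
    using assms by (intro lie_eq.sym[OF lincomb_filter]) auto
  finally show ?thesis .
qed

lemma br_lincomb:
  "lie_eq g n (Br (lincomb L1 f) (lincomb L2 h))
     (lincomb [Br a b. a \<leftarrow> L1, b \<leftarrow> L2] (\<lambda>m. case m of Br a b \<Rightarrow> f a * h b | _ \<Rightarrow> 0))"
proof -
  let ?F = "\<lambda>m. case m of Br a b \<Rightarrow> f a * h b | _ \<Rightarrow> 0"
  let ?row = "\<lambda>a. map (\<lambda>b. Smul (?F (Br a b)) (Br a b)) L2"
  have "lie_eq g n (Br (lincomb L1 f) (lincomb L2 h))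
      (lsum (map (\<lambda>a. Br (Smul (f a) a) (lincomb L2 h)) L1))"
    unfolding lincomb_def by (rule lie_eq_br_lsum_left)
  also have "lie_eq g n ... (lsum (map (\<lambda>a. lsum (?row a)) L1))"
  proof (rule lie_eq_lsum_cong)
    fix a
    have "lie_eq g n (Br (Smul (f a) a) (lincomb L2 h))
        (lsum (map (\<lambda>b. Br (Smul (f a) a) (Smul (h b) b)) L2))"
      unfolding lincomb_def by (rule lie_eq_br_lsum_right)
    also have "lie_eq g n ... (lsum (?row a))"
      by (rule lie_eq_lsum_cong) (simp add: lie_eq_br_smul_smul)
    finally show "lie_eq g n (Br (Smul (f a) a) (lincomb L2 h)) (lsum (?row a))" .
  qed
  also have "lie_eq g n ... (lincomb [Br a b. a \<leftarrow> L1, b \<leftarrow> L2] ?F)"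
    using lie_eq.sym[OF lie_eq_lsum_concat[of g n "map ?row L1"]]
    by (simp add: lincomb_def map_concat comp_def)
  finally show ?thesis .
qed

lemma distinct_concat_map_Br:
  "distinct xs \<Longrightarrow> distinct ys \<Longrightarrow> distinct [Br a b. a \<leftarrow> xs, b \<leftarrow> ys]"
  by (induction xs) (auto simp: distinct_map inj_on_def)

lemma lie_eq_lincomb_remdups: "lie_eq g n e (lincomb (remdups (lie_monos e)) (lie_coeff e))"
proof (induction e)
  case (Gen v)
  then show ?case
    by (simp add: lie_eq.sym[OF lie_eq.trans[OF lie_eq.add_zero lie_eq.smul_one]])
next
  case Zero
  then show ?case by (simp add: lie_eq.refl)
next
  case (Add x y)
  let ?L = "remdups (lie_monos x @ lie_monos y)"
  have coeff: "lie_coeff (Add x y) = (\<lambda>a. lie_coeff x a + lie_coeff y a)"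
    by (rule ext) simp
  have "lie_eq g n x (lincomb ?L (lie_coeff x))"
    using Add.IH(1) by (rule lie_eq.trans) (rule lincomb_ext; simp add: lie_coeff_eq_0)
  moreover have "lie_eq g n y (lincomb ?L (lie_coeff y))"
    using Add.IH(2) by (rule lie_eq.trans) (rule lincomb_ext; simp add: lie_coeff_eq_0)
  ultimately have "lie_eq g n (Add x y) (Add (lincomb ?L (lie_coeff x)) (lincomb ?L (lie_coeff y)))"
    by (rule lie_eq.cong_add)
  also have "lie_eq g n ... (lincomb ?L (lie_coeff (Add x y)))"
    unfolding coeff by (rule lincomb_add)
  finally show ?case by (simp only: lie_monos.simps)
next
  case (Smul c x)
  have coeff: "lie_coeff (Smul c x) = (\<lambda>a. c * lie_coeff x a)"
    by (rule ext) simp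
  have "lie_eq g n (Smul c x) (Smul c (lincomb (remdups (lie_monos x)) (lie_coeff x)))"
    using Smul.IH by (rule lie_eq.cong_smul)
  also have "lie_eq g n ... (lincomb (remdups (lie_monos x)) (lie_coeff (Smul c x)))"
    unfolding coeff by (rule lincomb_smul)
  finally show ?case by (simp only: lie_monos.simps)
next
  case (Br x y)
  let ?Lx = "remdups (lie_monos x)" and ?Ly = "remdups (lie_monos y)"
  have coeff: "(\<lambda>m. case m of Br a b \<Rightarrow> lie_coeff x a * lie_coeff y b | _ \<Rightarrow> 0) = lie_coeff (Br x y)"
    by (rule ext) simp
  have "lie_eq g n (Br x y) (Br (lincomb ?Lx (lie_coeff x)) (lincomb ?Ly (lie_coeff y)))"
    using Br.IH by (rule lie_eq.cong_br)
  also have "lie_eq g n ... (lincomb [Br a b. a \<leftarrow> ?Lx, b \<leftarrow> ?Ly] (lie_coeff (Br x y)))"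
    using br_lincomb[of g n ?Lx "lie_coeff x" ?Ly "lie_coeff y"] unfolding coeff .
  also have "lie_eq g n ... (lincomb (remdups (lie_monos (Br x y))) (lie_coeff (Br x y)))"
    by (rule lincomb_perm) (simp_all add: distinct_concat_map_Br)
  finally show ?case .
qed

lemma lie_eq_lincomb:
  "distinct L \<Longrightarrow> set (lie_monos e) \<subseteq> set L \<Longrightarrow> lie_eq g n e (lincomb L (lie_coeff e))"
  by (rule lie_eq.trans[OF lie_eq_lincomb_remdups], rule lincomb_ext) (auto simp: lie_coeff_eq_0)

lemma lie_eq_by_coeffs:
  assumes zero: "list_all (lie_zero g n) rs"
    and coeffs: "\<forall>a\<in>set (lie_monos e1 @ lie_monos e2 @ concat (map lie_monos rs)).
                   lie_coeff e1 a = lie_coeff e2 a + (\<Sum>r\<leftarrow>rs. lie_coeff r a)"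
  shows "lie_eq g n e1 e2"
proof -
  let ?R = "lsum rs"
  have coeff_R: "lie_coeff ?R a = (\<Sum>r\<leftarrow>rs. lie_coeff r a)" for a
    by (induction rs) simp_all
  have monos_R: "lie_monos ?R = concat (map lie_monos rs)"
    by (induction rs) simp_all
  let ?L = "remdups (lie_monos e1 @ lie_monos e2 @ lie_monos ?R)"
  have "lie_eq g n e1 (lincomb ?L (lie_coeff e1))"
    by (rule lie_eq_lincomb) auto
  also have "lincomb ?L (lie_coeff e1) = lincomb ?L (\<lambda>a. lie_coeff e2 a + lie_coeff ?R a)"
    unfolding lincomb_def using coeffs by (intro arg_cong[where f = lsum] map_cong) (auto simp: coeff_R monos_R)
  also have "lie_eq g n ... (Add (lincomb ?L (lie_coeff e2)) (lincomb ?L (lie_coeff ?R)))"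
    by (rule lie_eq.sym[OF lincomb_add])
  also have "lie_eq g n ... (Add e2 Zero)"
    by (intro lie_eq.cong_add lie_eq.trans[OF lie_eq.sym[OF lie_eq_lincomb] lie_zero_lsum[OF zero]]
        lie_eq.sym[OF lie_eq_lincomb]) auto
  also have "lie_eq g n ... e2"
    by (rule lie_eq.add_zero)
  finally show ?thesis .
qed

lemma lie_eq_if_coeffs_eq:
  "\<forall>a\<in>set (lie_monos e1 @ lie_monos e2). lie_coeff e1 a = lie_coeff e2 a \<Longrightarrow> lie_eq g n e1 e2"
  by (rule lie_eq_by_coeffs[where rs = "[]"]) simp_all

lemma lie_eq_br_swap: "lie_eq g n (Br x y) (Smul c z) \<Longrightarrow> lie_eq g n (Br y x) (Smul (- c) z)"
  by (rule lie_eq_by_coeffs[where rs = "[Add (Br y x) (Br x y), Smul (-1) (Sub (Br x y) (Smul c z))]"])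
     simp_all

lemma lie_zero_br_swap: "lie_zero g n (Br x y) \<Longrightarrow> lie_zero g n (Br y x)"
  by (rule lie_eq_by_coeffs[where rs = "[Add (Br y x) (Br x y), Smul (-1) (Br x y)]"]) simp_all

lemma lie_zero_jacobi_left: "lie_zero g n (Add (Br (Br y z) x) (Add (Br (Br z x) y) (Br (Br x y) z)))"
  by (rule lie_eq_by_coeffs[where rs = "[
        Smul (-1) (Add (Br x (Br y z)) (Add (Br y (Br z x)) (Br z (Br x y)))),
        Add (Br (Br y z) x) (Br x (Br y z)), Add (Br (Br z x) y) (Br y (Br z x)),
        Add (Br (Br x y) z) (Br z (Br x y))]"])
     (simp_all split: lie.split)

lemma lie_eq_if_rel_Sub: "is_rel g n (Sub x y) \<Longrightarrow> lie_eq g n x y"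
  by (rule lie_eq_by_coeffs[where rs = "[Sub x y]"]) (simp_all add: lie_eq.rel)

lemma rel_T_central: "i \<in> {1..n} \<Longrightarrow> valid_gen g n a \<Longrightarrow> lie_zero g n (Br (T i i) (Gen a))"
  by (rule lie_eq.rel, unfold is_rel_def, rule disjI1, blast)

lemma rel_T_sym: "i \<in> {1..n} \<Longrightarrow> j \<in> {1..n} \<Longrightarrow> lie_eq g n (T i j) (T j i)"
  by (rule lie_eq_if_rel_Sub, unfold is_rel_def, rule disjI2, rule disjI1, blast)

lemma rel_X_X:
  "i \<in> {1..n} \<Longrightarrow> j \<in> {1..n} \<Longrightarrow> i \<noteq> j \<Longrightarrow> k \<in> {1..g} \<Longrightarrow> l \<in> {1..g} \<Longrightarrow>
   lie_zero g n (Br (X k i) (X l j))"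
  by (rule lie_eq.rel) (unfold is_rel_def, blast)

lemma rel_Y_Y:
  "i \<in> {1..n} \<Longrightarrow> j \<in> {1..n} \<Longrightarrow> i \<noteq> j \<Longrightarrow> k \<in> {1..g} \<Longrightarrow> l \<in> {1..g} \<Longrightarrow>
   lie_zero g n (Br (Y k i) (Y l j))"
  by (rule lie_eq.rel) (unfold is_rel_def, blast)

lemma rel_X_Y:
  "i \<in> {1..n} \<Longrightarrow> j \<in> {1..n} \<Longrightarrow> i \<noteq> j \<Longrightarrow> k \<in> {1..g} \<Longrightarrow> l \<in> {1..g} \<Longrightarrow> k \<noteq> l \<Longrightarrow>
   lie_zero g n (Br (X k i) (Y l j))"
  by (rule lie_eq.rel) (unfold is_rel_def, blast)

lemma rel_X_Y_T:
  "i \<in> {1..n} \<Longrightarrow> j \<in> {1..n} \<Longrightarrow> i \<noteq> j \<Longrightarrow> k \<in> {1..g} \<Longrightarrow>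
   lie_eq g n (Br (X k i) (Y k j)) (T i j)"
  by (rule lie_eq_if_rel_Sub) (unfold is_rel_def, blast)

lemma rel_sum_at_point:
  "i \<in> {1..n} \<Longrightarrow>
   lie_zero g n (Add (lsum (map (\<lambda>k. Br (X k i) (Y k i)) [1..<g+1]))
                     (Add (lsum (map (\<lambda>j. T i j) (filter (\<lambda>j. j \<noteq> i) [1..<n+1])))
                          (Smul (2 - 2 * of_nat g) (T i i))))"
  by (rule lie_eq.rel) (unfold is_rel_def, blast)

section \<open>Brackets of the generators z\<close>

lemma pair_swap: "pair q p = - pair p q"
  by (cases p; cases q) auto

lemma pair_eq_0_unless_dual: "c \<noteq> dual x \<Longrightarrow> pair c x = 0"
  by (cases c; cases x) auto

lemma pair_dual_left: "pair (dual x) x = - pair x (dual x)"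
  by (cases x) auto

lemma dual_eq_iff [simp]: "dual x = dual y \<longleftrightarrow> x = y"
  by (cases x; cases y) auto

fun zgen :: "cls \<Rightarrow> nat \<Rightarrow> gen" where
  "zgen (A l) i = Xg l i"
| "zgen (B l) i = Yg l i"

abbreviation Z :: "cls \<Rightarrow> nat \<Rightarrow> 'k lie" where
  "Z c i \<equiv> Gen (zgen c i)"

lemma z1_eq_Z: "z1 c = Z c 1"
  by (cases c) simp_all

lemma zgen_eq_iff [simp]: "zgen c i = zgen d j \<longleftrightarrow> c = d \<and> i = j"
  by (cases c; cases d) auto

lemma zgen_neq_Tg [simp]: "zgen c i \<noteq> Tg j k" "Tg j k \<noteq> zgen c i"
  by (cases c; simp)+

lemma cls_set_iff: "c \<in> cls_set g \<longleftrightarrow> (\<exists>l\<in>{1..g}. c = A l \<or> c = B l)"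
  unfolding cls_set_def by auto

lemma valid_gen_zgen: "c \<in> cls_set g \<Longrightarrow> i \<in> {1..n} \<Longrightarrow> valid_gen g n (zgen c i)"
  by (auto simp: cls_set_def)

lemma br_X_Y_points:
  assumes "i \<in> {1..n}" "j \<in> {1..n}" "i \<noteq> j" "k \<in> {1..g}" "l \<in> {1..g}"
  shows "lie_eq g n (Br (X k i) (Y l j)) (Smul (of_int (pair (B l) (A k))) (T i j) :: 'k::field lie)"
proof (cases "k = l")
  case True
  have "lie_eq g n (Br (X k i) (Y k j)) (T i j :: 'k lie)"
    using assms by (intro rel_X_Y_T)
  with True show ?thesis
    by (intro lie_eq_by_coeffs[where rs = "[Sub (Br (X k i) (Y k j)) (T i j)]"]) simp_all
next
  case False
  have "lie_zero g n (Br (X k i) (Y l j) :: 'k lie)"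
    using assms False by (intro rel_X_Y)
  with False show ?thesis
    by (intro lie_eq_by_coeffs[where rs = "[Br (X k i) (Y l j)]"]) simp_all
qed

lemma br_Z_Z_points:
  assumes ij: "i \<in> {1..n}" "j \<in> {1..n}" "i \<noteq> j" and p: "p \<in> cls_set g" and r: "r \<in> cls_set g"
  shows "lie_eq g n (Br (Z p i) (Z r j)) (Smul (of_int (pair r p)) (T i j) :: 'k::field lie)"
proof -
  obtain k where k: "k \<in> {1..g}" "p = A k \<or> p = B k"
    using p by (auto simp: cls_set_iff)
  obtain l where l: "l \<in> {1..g}" "r = A l \<or> r = B l"
    using r by (auto simp: cls_set_iff)
  consider "p = A k" "r = A l" | "p = A k" "r = B l" | "p = B k" "r = A l" | "p = B k" "r = B l"
    using k l by blast
  then show ?thesis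
  proof cases
    case 1
    have "lie_zero g n (Br (X k i) (X l j) :: 'k lie)"
      using ij k l by (intro rel_X_X)
    with 1 show ?thesis
      by (intro lie_eq_by_coeffs[where rs = "[Br (X k i) (X l j)]"]) simp_all
  next
    case 2
    then show ?thesis
      using br_X_Y_points[OF ij k(1) l(1)] by simp
  next
    case 3
    have "lie_eq g n (Br (X l j) (Y k i)) (Smul (of_int (pair (B k) (A l))) (T j i) :: 'k lie)"
      using ij k l by (intro br_X_Y_points) auto
    then have "lie_eq g n (Br (Y k i) (X l j)) (Smul (- of_int (pair (B k) (A l))) (T j i) :: 'k lie)"
      by (rule lie_eq_br_swap)
    also have "lie_eq g n ... (Smul (- of_int (pair (B k) (A l))) (T i j))"
      using ij by (intro lie_eq.cong_smul rel_T_sym)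
    finally show ?thesis
      using 3 by (cases "k = l") simp_all
  next
    case 4
    have "lie_zero g n (Br (Y k i) (Y l j) :: 'k lie)"
      using ij k l by (intro rel_Y_Y)
    with 4 show ?thesis
      by (intro lie_eq_by_coeffs[where rs = "[Br (Y k i) (Y l j)]"]) simp_all
  qed
qed

lemma br_Z_Z_points':
  assumes "i \<in> {1..n}" "j \<in> {1..n}" "i \<noteq> j" "p \<in> cls_set g" "r \<in> cls_set g"
  shows "lie_eq g n (Br (Z p j) (Z r i)) (Smul (of_int (pair r p)) (T i j) :: 'k::field lie)"
proof -
  have "lie_eq g n (Br (Z p j) (Z r i)) (Smul (of_int (pair r p)) (T j i) :: 'k lie)"
    using assms by (intro br_Z_Z_points) auto
  also have "lie_eq g n ... (Smul (of_int (pair r p)) (T i j))"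
    using assms by (intro lie_eq.cong_smul rel_T_sym)
  finally show ?thesis .
qed

lemma br_Z_T_other_points:
  assumes g: "2 \<le> g" and q: "q \<in> cls_set g"
    and ijk: "i \<in> {1..n}" "j \<in> {1..n}" "k \<in> {1..n}" "distinct [i, j, k]"
  shows "lie_zero g n (Br (Z q i) (T j k) :: 'k::field lie)"
proof -
  obtain h where h: "h \<in> {1..g}" "q = A h \<or> q = B h"
    using q by (auto simp: cls_set_iff)
  define m where "m = (if h = 1 then 2 else 1 :: nat)"
  have m: "m \<in> {1..g}" "m \<noteq> h"
    using g h by (auto simp: m_def)
  then have "pair (A m) q = 0" "pair q (B m) = 0"
    using h by auto
  \<comment> \<open>\<open>t_jk = [x_m^(j), y_m^(k)]\<close> for a handle \<open>m\<close> different from that of \<open>q\<close>, and \<open>z_q^(i)\<close>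
    commutes with both factors.\<close>
  moreover have "lie_eq g n (Br (Z q i) (X m j)) (Smul (of_int (pair (A m) q)) (T i j) :: 'k lie)"
    "lie_eq g n (Br (Y m k) (Z q i)) (Smul (of_int (pair q (B m))) (T k i) :: 'k lie)"
    using ijk m q br_Z_Z_points[of i n j q g "A m"] br_Z_Z_points[of k n i "B m" g q]
    by (auto simp: cls_set_def)
  moreover have "lie_eq g n (Br (X m j) (Y m k)) (T j k :: 'k lie)"
    using ijk m by (intro rel_X_Y_T) auto
  ultimately show ?thesis
    by (intro lie_eq_by_coeffs[where rs = "[
          Add (Br (Z q i) (Br (X m j) (Y m k))) (Add (Br (X m j) (Br (Y m k) (Z q i))) (Br (Y m k) (Br (Z q i) (X m j)))),
          Smul (-1) (Br (Z q i) (Sub (Br (X m j) (Y m k)) (T j k))),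
          Smul (-1) (Br (X m j) (Sub (Br (Y m k) (Z q i)) (Smul 0 (T k i)))),
          Smul (-1) (Br (Y m k) (Sub (Br (Z q i) (X m j)) (Smul 0 (T i j))))]"]) simp_all
qed

lemma br_Z_br_X_Y:
  assumes ij: "i \<in> {1..n}" "j \<in> {1..n}" "i \<noteq> j" and q: "q \<in> cls_set g" and l: "l \<in> {1..g}"
  shows "lie_eq g n (Br (Z q i) (Br (X l j) (Y l j)) :: 'k::field lie)
           (if q = A l \<or> q = B l then Br (Z q j) (T i j) else Zero)"
proof -
  let ?a = "of_int (pair (A l) q) :: 'k" and ?b = "of_int (pair (B l) q) :: 'k"
  have Al: "A l \<in> cls_set g" and Bl: "B l \<in> cls_set g"
    using l by (auto simp: cls_set_def)
  have "lie_eq g n (Br (Z q i) (X l j)) (Smul ?a (T i j))"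
    using br_Z_Z_points[OF ij q Al] by simp
  moreover have "lie_eq g n (Br (Z q i) (Y l j)) (Smul ?b (T i j))"
    using br_Z_Z_points[OF ij q Bl] by simp
  ultimately have "lie_eq g n (Br (Z q i) (Br (X l j) (Y l j)))
      (Add (Smul ?b (Br (X l j) (T i j))) (Smul (- ?a) (Br (Y l j) (T i j))))"
    by (intro lie_eq_by_coeffs[where rs = "[
          Add (Br (Z q i) (Br (X l j) (Y l j))) (Add (Br (X l j) (Br (Y l j) (Z q i))) (Br (Y l j) (Br (Z q i) (X l j)))),
          Smul (-1) (Br (X l j) (Add (Br (Y l j) (Z q i)) (Br (Z q i) (Y l j)))),
          Br (X l j) (Sub (Br (Z q i) (Y l j)) (Smul ?b (T i j))),
          Smul (-1) (Br (Y l j) (Sub (Br (Z q i) (X l j)) (Smul ?a (T i j))))]"]) simp_all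
  also have "lie_eq g n ... (if q = A l \<or> q = B l then Br (Z q j) (T i j) else Zero)"
    by (rule lie_eq_if_coeffs_eq) (cases q; auto)
  finally show ?thesis .
qed

lemma br_Z_sum_X_Y:
  assumes ij: "i \<in> {1..n}" "j \<in> {1..n}" "i \<noteq> j" and q: "q \<in> cls_set g"
  shows "lie_eq g n (Br (Z q i) (lsum (map (\<lambda>l. Br (X l j) (Y l j)) [1..<g+1])))
           (Br (Z q j) (T i j) :: 'k::field lie)"
proof -
  obtain h where h: "h \<in> {1..g}" "q = A h \<or> q = B h"
    using q by (auto simp: cls_set_iff)
  have "lie_eq g n (Br (Z q i) (lsum (map (\<lambda>l. Br (X l j) (Y l j)) [1..<g+1])))
      (lsum (map (\<lambda>l. Br (Z q i) (Br (X l j) (Y l j))) [1..<g+1]) :: 'k lie)"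
    by (rule lie_eq_br_lsum_right)
  also have "lie_eq g n ...
      (lsum (map (\<lambda>l. if q = A l \<or> q = B l then Br (Z q j) (T i j) else Zero) [1..<g+1]))"
    using ij q by (intro lie_eq_lsum_cong br_Z_br_X_Y) auto
  also have "lie_eq g n ... (if q = A h \<or> q = B h then Br (Z q j) (T i j) else Zero)"
    using h by (intro lie_eq_lsum_single[where k = h]) (auto intro: lie_eq.refl)
  also have "(if q = A h \<or> q = B h then Br (Z q j) (T i j) else Zero) = Br (Z q j) (T i j)"
    using h by simp
  finally show ?thesis .
qed

text \<open>Bracketing the defining relation at point 2 with \<open>z_q^(1)\<close>: only the summand of the
  handle of \<open>q\<close> and the term \<open>t_21\<close> survive.\<close>

lemma br_T12_Z2:
  assumes g: "2 \<le> g" and q: "q \<in> cls_set g"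
  shows "lie_eq g 3 (Br (T 1 2) (Z q 2)) (Smul (-1) (Br (T 1 2) (Z q 1)) :: 'k::field lie)"
proof -
  let ?S = "lsum (map (\<lambda>l. Br (X l 2) (Y l 2)) [1..<g+1]) :: 'k lie"
  let ?rest = "Add (Add (T 2 1) (Add (T 2 3) Zero)) (Smul (2 - 2 * of_nat g) (T 2 2)) :: 'k lie"
  have S: "lie_eq g 3 (Br (Z q 1) ?S) (Br (Z q 2) (T 1 2))"
    using q by (intro br_Z_sum_X_Y) auto
  have "filter (\<lambda>j. j \<noteq> 2) [1..<3+1] = [1, 3 :: nat]"
    by (simp add: upt_rec)
  then have "lie_zero g 3 (Add ?S ?rest)"
    using rel_sum_at_point[of 2 3 g] by (simp only: list.map lsum_Cons lsum_Nil) simp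
  then have rel_at_2: "lie_zero g 3 (Br (Z q 1) (Add ?S ?rest))"
    by simp
  have "lie_eq g 3 (Add (Br (Z q 2) (T 1 2)) (Br (Z q 1) ?rest)) (Add (Br (Z q 1) ?S) (Br (Z q 1) ?rest))"
    by (intro lie_eq.cong_add lie_eq.sym[OF S] lie_eq.refl)
  also have "lie_eq g 3 ... (Br (Z q 1) (Add ?S ?rest))"
    by (rule lie_eq.sym[OF lie_eq.br_add_r])
  also have "lie_eq g 3 ... Zero"
    by (rule rel_at_2)
  finally have rel: "lie_zero g 3 (Add (Br (Z q 2) (T 1 2)) (Br (Z q 1) ?rest))" .
  have "lie_zero g 3 (Br (Z q 1) (T 2 3) :: 'k lie)"
    using g q by (rule br_Z_T_other_points) auto
  moreover have "lie_zero g 3 (Br (Z q 1) (T 2 2) :: 'k lie)"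
    by (rule lie_zero_br_swap, rule rel_T_central) (auto intro: valid_gen_zgen q)
  moreover have "lie_eq g 3 (T 2 1) (T 1 2 :: 'k lie)"
    by (rule rel_T_sym) auto
  ultimately show ?thesis
    using rel by (intro lie_eq_by_coeffs[where rs = "[
          Add (Br (T 1 2) (Z q 2)) (Br (Z q 2) (T 1 2)),
          Add (Br (T 1 2) (Z q 1)) (Br (Z q 1) (T 1 2)),
          Smul (-1) (Add (Br (Z q 2) (T 1 2)) (Br (Z q 1) ?rest)),
          Br (Z q 1) (Sub (T 2 1) (T 1 2)),
          Br (Z q 1) (T 2 3),
          Smul (2 - 2 * of_nat g) (Br (Z q 1) (T 2 2))]"]) simp_all
qed

section \<open>The family V as a contraction\<close>

definition W :: "nat \<Rightarrow> cls \<Rightarrow> cls \<Rightarrow> 'k::field lie" where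
  "W i p q = Add (Br (Z p i) (Z q i)) (Smul (2 * of_int (pair p q)) (T i i))"

text \<open>\<open>contract \<alpha> \<beta> \<gamma> c F\<close> applies \<open>F\<close> to the contraction
  \<open>\<langle>c,\<alpha>\<rangle> \<beta>\<and>\<gamma> - \<langle>c,\<beta>\<rangle> \<alpha>\<and>\<gamma> + \<langle>c,\<gamma>\<rangle> \<alpha>\<and>\<beta>\<close> of \<open>c\<close> with \<open>\<alpha>\<and>\<beta>\<and>\<gamma>\<close>;
  since \<open>\<langle>c,x\<rangle> \<noteq> 0\<close> only for \<open>c = x*\<close>, \<open>V\<^sub>c\<close> is this contraction for \<open>F = W 1\<close>.\<close>

definition contract :: "cls \<Rightarrow> cls \<Rightarrow> cls \<Rightarrow> cls \<Rightarrow> (cls \<Rightarrow> cls \<Rightarrow> 'k::field lie) \<Rightarrow> 'k lie" where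
  "contract \<alpha> \<beta> \<gamma> c F =
     Add (Smul (of_int (pair c \<alpha>)) (F \<beta> \<gamma>))
         (Add (Smul (- of_int (pair c \<beta>)) (F \<alpha> \<gamma>)) (Smul (of_int (pair c \<gamma>)) (F \<alpha> \<beta>)))"

lemma V_eq_W:
  "V \<alpha> \<beta> \<gamma> c =
    (if c = dual \<alpha> then Smul (- of_int (pair \<alpha> (dual \<alpha>))) (W 1 \<beta> \<gamma>)
     else if c = dual \<beta> then Smul (of_int (pair \<beta> (dual \<beta>))) (W 1 \<alpha> \<gamma>)
     else if c = dual \<gamma> then Smul (- of_int (pair \<gamma> (dual \<gamma>))) (W 1 \<alpha> \<beta>)
     else Zero)"
  by (simp add: V_def W_def z1_eq_Z)

lemma up_V:
  assumes "distinct [\<alpha>, \<beta>, \<gamma>]"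
  shows "lie_eq g n (up m \<phi> (V \<alpha> \<beta> \<gamma> c)) (contract \<alpha> \<beta> \<gamma> c (\<lambda>p q. up m \<phi> (W 1 p q)))"
proof -
  have pairs: "pair c \<alpha> = 0 \<or> c = dual \<alpha>" "pair c \<beta> = 0 \<or> c = dual \<beta>" "pair c \<gamma> = 0 \<or> c = dual \<gamma>"
    using pair_eq_0_unless_dual by blast+
  show ?thesis
    using assms pairs
    by (intro lie_eq_if_coeffs_eq)
       (auto simp: V_eq_W contract_def up_def pair_dual_left)
qed

lemma contract_cong:
  "lie_eq g n (F \<beta> \<gamma>) (G \<beta> \<gamma>) \<Longrightarrow> lie_eq g n (F \<alpha> \<gamma>) (G \<alpha> \<gamma>) \<Longrightarrow> lie_eq g n (F \<alpha> \<beta>) (G \<alpha> \<beta>) \<Longrightarrow>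
   lie_eq g n (contract \<alpha> \<beta> \<gamma> c F) (contract \<alpha> \<beta> \<gamma> c G)"
  unfolding contract_def by (intro lie_eq.cong_add lie_eq.cong_smul)

lemma contract_add:
  "lie_eq g n (contract \<alpha> \<beta> \<gamma> c (\<lambda>p q. Add (F p q) (G p q)))
     (Add (contract \<alpha> \<beta> \<gamma> c F) (contract \<alpha> \<beta> \<gamma> c G))"
  by (rule lie_eq_if_coeffs_eq) (simp add: contract_def algebra_simps)

lemma br_contract:
  "lie_eq g n (Br (contract \<alpha> \<beta> \<gamma> c F) w) (contract \<alpha> \<beta> \<gamma> c (\<lambda>p q. Br (F p q) w))"
  by (rule lie_eq_if_coeffs_eq) (simp add: contract_def algebra_simps split: lie.split)

lemma pull_zgen [simp]: "pull m \<phi> (zgen c k) = lsum (map (Z c) (preim m \<phi> k))"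
  by (cases c) simp_all

lemma up_W_single: "preim m \<phi> 1 = [i] \<Longrightarrow> lie_eq g n (up m \<phi> (W 1 p q)) (W i p q)"
  by (rule lie_eq_if_coeffs_eq) (simp add: up_def W_def)

lemma up_V_single:
  assumes "distinct [\<alpha>, \<beta>, \<gamma>]" and "preim m \<phi> 1 = [i]"
  shows "lie_eq g n (up m \<phi> (V \<alpha> \<beta> \<gamma> c)) (contract \<alpha> \<beta> \<gamma> c (W i))"
  using up_V[OF assms(1)] by (rule lie_eq.trans) (intro contract_cong up_W_single assms(2))

text \<open>The doubling maps: \<open>W\<close> is primitive, because the cross terms
  \<open>[z_p^(1), z_q^(2)] + [z_p^(2), z_q^(1)] = 2\<langle>q,p\<rangle> t_12\<close> cancel against \<open>\<langle>p,q\<rangle>(t_12 + t_21)\<close>.\<close>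

lemma up_W_double:
  assumes \<phi>: "preim m \<phi> 1 = [1, 2]" and n: "2 \<le> n" and p: "p \<in> cls_set g" and q: "q \<in> cls_set g"
  shows "lie_eq g n (up m \<phi> (W 1 p q)) (Add (W 1 p q) (W 2 p q) :: 'k::field_char_0 lie)"
proof -
  have "lie_eq g n (Br (Z p 1) (Z q 2)) (Smul (of_int (pair q p)) (T 1 2) :: 'k lie)"
    using n p q by (intro br_Z_Z_points) auto
  moreover have "lie_eq g n (Br (Z p 2) (Z q 1)) (Smul (of_int (pair q p)) (T 1 2) :: 'k lie)"
    using n p q by (intro br_Z_Z_points') auto
  moreover have "lie_eq g n (T 2 1) (T 1 2 :: 'k lie)"
    using n by (intro rel_T_sym) auto
  moreover have "of_int (pair q p) = - (of_int (pair p q) :: 'k)"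
    by (simp add: pair_swap[of q p])
  ultimately show ?thesis
    using \<phi> by (intro lie_eq_by_coeffs[where rs = "[
          Sub (Br (Z p 1) (Z q 2)) (Smul (of_int (pair q p)) (T 1 2)),
          Sub (Br (Z p 2) (Z q 1)) (Smul (of_int (pair q p)) (T 1 2)),
          Smul (of_int (pair p q)) (Sub (T 2 1) (T 1 2))]"])
       (simp_all add: up_def W_def)
qed

lemma up_V_double:
  assumes d: "distinct [\<alpha>, \<beta>, \<gamma>]" and abc: "\<alpha> \<in> cls_set g" "\<beta> \<in> cls_set g" "\<gamma> \<in> cls_set g"
    and n: "2 \<le> n" and preims: "preim m \<phi> 1 = [1, 2]" "preim m \<psi>\<^sub>1 1 = [1]" "preim m \<psi>\<^sub>2 1 = [2]"
  shows "lie_eq g n (up m \<phi> (V \<alpha> \<beta> \<gamma> c))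
           (Add (up m \<psi>\<^sub>1 (V \<alpha> \<beta> \<gamma> c)) (up m \<psi>\<^sub>2 (V \<alpha> \<beta> \<gamma> c)) :: 'k::field_char_0 lie)"
proof -
  have "lie_eq g n (up m \<phi> (V \<alpha> \<beta> \<gamma> c)) (contract \<alpha> \<beta> \<gamma> c (\<lambda>p q. up m \<phi> (W 1 p q)) :: 'k lie)"
    using d by (rule up_V)
  also have "lie_eq g n ... (contract \<alpha> \<beta> \<gamma> c (\<lambda>p q. Add (W 1 p q) (W 2 p q)))"
    using preims n abc by (intro contract_cong up_W_double)
  also have "lie_eq g n ... (Add (contract \<alpha> \<beta> \<gamma> c (W 1)) (contract \<alpha> \<beta> \<gamma> c (W 2)))"
    by (rule contract_add)
  also have "lie_eq g n ... (Add (up m \<psi>\<^sub>1 (V \<alpha> \<beta> \<gamma> c)) (up m \<psi>\<^sub>2 (V \<alpha> \<beta> \<gamma> c)))"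
    using d preims by (intro lie_eq.cong_add lie_eq.sym[OF up_V_single])
  finally show ?thesis .
qed

lemma br_up_V:
  assumes "distinct [\<alpha>, \<beta>, \<gamma>]" and "preim m \<phi> 1 = [i]"
  shows "lie_eq g n (Br (up m \<phi> (V \<alpha> \<beta> \<gamma> c)) w) (contract \<alpha> \<beta> \<gamma> c (\<lambda>p q. Br (W i p q) w))"
  using lie_eq.cong_br[OF up_V_single[OF assms] lie_eq.refl] br_contract by (rule lie_eq.trans)

text \<open>\<open>Z_iprod r p q i\<close> is \<open>z^(i)\<close> of the interior product \<open>\<langle>r,p\<rangle> q - \<langle>r,q\<rangle> p\<close>.\<close>

definition Z_iprod :: "cls \<Rightarrow> cls \<Rightarrow> cls \<Rightarrow> nat \<Rightarrow> 'k::field lie" where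
  "Z_iprod r p q i = Add (Smul (of_int (pair r p)) (Z q i)) (Smul (- of_int (pair r q)) (Z p i))"

lemma br_W1_Z1:
  assumes "1 \<le> n" "x \<in> cls_set g"
  shows "lie_eq g n (Br (W 1 p q) (Z x 1)) (Br (Br (Z p 1) (Z q 1)) (Z x 1) :: 'k::field lie)"
proof -
  have "lie_zero g n (Br (T 1 1) (Z x 1) :: 'k lie)"
    using assms by (intro rel_T_central valid_gen_zgen) auto
  then show ?thesis
    by (intro lie_eq_by_coeffs[where rs = "[Smul (2 * of_int (pair p q)) (Br (T 1 1) (Z x 1))]"])
       (simp_all add: W_def)
qed

lemma br_W1_Z2:
  assumes n: "2 \<le> n" and p: "p \<in> cls_set g" and q: "q \<in> cls_set g" and r: "r \<in> cls_set g"
  shows "lie_eq g n (Br (W 1 p q) (Z r 2)) (Br (T 1 2) (Z_iprod r p q 1) :: 'k::field lie)"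
proof -
  let ?kp = "of_int (pair r p) :: 'k" and ?kq = "of_int (pair r q) :: 'k"
  have "lie_eq g n (Br (Z p 1) (Z r 2)) (Smul ?kp (T 1 2))"
    using n p r by (intro br_Z_Z_points) auto
  moreover have "lie_eq g n (Br (Z q 1) (Z r 2)) (Smul ?kq (T 1 2))"
    using n q r by (intro br_Z_Z_points) auto
  moreover have "lie_zero g n (Br (T 1 1) (Z r 2) :: 'k lie)"
    using n r by (intro rel_T_central valid_gen_zgen) auto
  ultimately show ?thesis
    by (intro lie_eq_by_coeffs[where rs = "[
          Add (Br (Br (Z p 1) (Z q 1)) (Z r 2)) (Br (Z r 2) (Br (Z p 1) (Z q 1))),
          Smul (-1) (Add (Br (Z p 1) (Br (Z q 1) (Z r 2)))
            (Add (Br (Z q 1) (Br (Z r 2) (Z p 1))) (Br (Z r 2) (Br (Z p 1) (Z q 1))))),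
          Br (Z p 1) (Sub (Br (Z q 1) (Z r 2)) (Smul ?kq (T 1 2))),
          Smul ?kq (Add (Br (Z p 1) (T 1 2)) (Br (T 1 2) (Z p 1))),
          Br (Z q 1) (Add (Br (Z r 2) (Z p 1)) (Br (Z p 1) (Z r 2))),
          Smul (-1) (Add (Br (Br (Z p 1) (Z r 2)) (Z q 1)) (Br (Z q 1) (Br (Z p 1) (Z r 2)))),
          Br (Sub (Br (Z p 1) (Z r 2)) (Smul ?kp (T 1 2))) (Z q 1),
          Smul (2 * of_int (pair p q)) (Br (T 1 1) (Z r 2))]"])
       (simp_all add: W_def Z_iprod_def algebra_simps)
qed

lemma br_W2_Z1:
  assumes g: "2 \<le> g" and p: "p \<in> cls_set g" and q: "q \<in> cls_set g" and r: "r \<in> cls_set g"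
  shows "lie_eq g 3 (Br (W 2 p q) (Z r 1)) (Smul (-1) (Br (T 1 2) (Z_iprod r p q 1)) :: 'k::field lie)"
proof -
  let ?kp = "of_int (pair r p) :: 'k" and ?kq = "of_int (pair r q) :: 'k"
  have "lie_eq g 3 (Br (Z p 2) (Z r 1)) (Smul ?kp (T 1 2))"
    using p r by (intro br_Z_Z_points') auto
  moreover have "lie_eq g 3 (Br (Z q 2) (Z r 1)) (Smul ?kq (T 1 2))"
    using q r by (intro br_Z_Z_points') auto
  moreover have "lie_zero g 3 (Br (T 2 2) (Z r 1) :: 'k lie)"
    using r by (intro rel_T_central valid_gen_zgen) auto
  moreover have "lie_eq g 3 (Br (T 1 2) (Z p 2)) (Smul (-1) (Br (T 1 2) (Z p 1)) :: 'k lie)"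
    using g p by (rule br_T12_Z2)
  moreover have "lie_eq g 3 (Br (T 1 2) (Z q 2)) (Smul (-1) (Br (T 1 2) (Z q 1)) :: 'k lie)"
    using g q by (rule br_T12_Z2)
  ultimately show ?thesis
    by (intro lie_eq_by_coeffs[where rs = "[
          Add (Br (Br (Z p 2) (Z q 2)) (Z r 1)) (Br (Z r 1) (Br (Z p 2) (Z q 2))),
          Smul (-1) (Add (Br (Z p 2) (Br (Z q 2) (Z r 1)))
            (Add (Br (Z q 2) (Br (Z r 1) (Z p 2))) (Br (Z r 1) (Br (Z p 2) (Z q 2))))),
          Br (Z p 2) (Sub (Br (Z q 2) (Z r 1)) (Smul ?kq (T 1 2))),
          Smul ?kq (Add (Br (Z p 2) (T 1 2)) (Br (T 1 2) (Z p 2))),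
          Br (Z q 2) (Add (Br (Z r 1) (Z p 2)) (Br (Z p 2) (Z r 1))),
          Smul (-1) (Add (Br (Br (Z p 2) (Z r 1)) (Z q 2)) (Br (Z q 2) (Br (Z p 2) (Z r 1)))),
          Br (Sub (Br (Z p 2) (Z r 1)) (Smul ?kp (T 1 2))) (Z q 2),
          Smul (2 * of_int (pair p q)) (Br (T 2 2) (Z r 1)),
          Smul ?kp (Sub (Br (T 1 2) (Z q 2)) (Smul (-1) (Br (T 1 2) (Z q 1)))),
          Smul (- ?kq) (Sub (Br (T 1 2) (Z p 2)) (Smul (-1) (Br (T 1 2) (Z p 1))))]"])
       (simp_all add: W_def Z_iprod_def algebra_simps)
qed

section \<open>The conditions defining Z\<close>

lemma wf_V:
  assumes "1 \<le> n" "\<alpha> \<in> cls_set g" "\<beta> \<in> cls_set g" "\<gamma> \<in> cls_set g"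
  shows "wf g n (V \<alpha> \<beta> \<gamma> c)"
  using assms by (auto simp: wf_def V_eq_W W_def valid_gen_zgen)

lemma preim_coface:
  "preim 2 (\<lambda>i. i) 1 = [1]" "preim 2 (\<lambda>i. if i = 1 then 2 else 1) 1 = [2]" "preim 2 (\<lambda>i. 1) 1 = [1, 2]"
  "preim 3 (\<lambda>i. if i \<le> 2 then 1 else 2) 1 = [1, 2]"
  "preim 3 (\<lambda>i. if i = 1 then 1 else 2) 1 = [1]" "preim 3 (\<lambda>i. if i = 2 then 1 else 2) 1 = [2]"
  by (simp_all add: preim_def upt_rec)

lemma V_sup_12:
  "distinct [\<alpha>, \<beta>, \<gamma>] \<Longrightarrow> \<alpha> \<in> cls_set g \<Longrightarrow> \<beta> \<in> cls_set g \<Longrightarrow> \<gamma> \<in> cls_set g \<Longrightarrow>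
   lie_eq g 2 (sup_12 (V \<alpha> \<beta> \<gamma> c))
     (Add (sup_1_2 (V \<alpha> \<beta> \<gamma> c)) (sup_2_1 (V \<alpha> \<beta> \<gamma> c)) :: 'k::field_char_0 lie)"
  unfolding sup_12_def sup_1_2_def sup_2_1_def using preim_coface by (intro up_V_double) simp_all

lemma V_sup_12_3:
  assumes "distinct [\<alpha>, \<beta>, \<gamma>]" "\<alpha> \<in> cls_set g" "\<beta> \<in> cls_set g" "\<gamma> \<in> cls_set g"
  shows "lie_zero g 3 (Sub (Sub (sup_12_3 (V \<alpha> \<beta> \<gamma> c)) (sup_1_23 (V \<alpha> \<beta> \<gamma> c)))
           (sup_2_13 (V \<alpha> \<beta> \<gamma> c)) :: 'k::field_char_0 lie)"
proof -
  have "lie_eq g 3 (sup_12_3 (V \<alpha> \<beta> \<gamma> c))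
      (Add (sup_1_23 (V \<alpha> \<beta> \<gamma> c)) (sup_2_13 (V \<alpha> \<beta> \<gamma> c)) :: 'k lie)"
    unfolding sup_12_3_def sup_1_23_def sup_2_13_def
    using assms preim_coface by (intro up_V_double) simp_all
  then show ?thesis
    by (intro lie_eq_by_coeffs[where rs = "[Sub (sup_12_3 (V \<alpha> \<beta> \<gamma> c))
          (Add (sup_1_23 (V \<alpha> \<beta> \<gamma> c)) (sup_2_13 (V \<alpha> \<beta> \<gamma> c)))]"]) simp_all
qed

text \<open>Both brackets reduce to \<open>[t_12, z^(1)]\<close> applied to the double contraction of \<open>r'\<close> and
  \<open>r\<close> with \<open>\<alpha>\<and>\<beta>\<and>\<gamma>\<close>, which is antisymmetric in \<open>r, r'\<close>.\<close>

lemma V_mixed_brackets: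
  assumes g: "2 \<le> g" and d: "distinct [\<alpha>, \<beta>, \<gamma>]"
    and abc: "\<alpha> \<in> cls_set g" "\<beta> \<in> cls_set g" "\<gamma> \<in> cls_set g" and r: "r \<in> cls_set g" "r' \<in> cls_set g"
  shows "lie_zero g 3 (Sub (Br (sup_1_23 (V \<alpha> \<beta> \<gamma> r')) (Z r 2))
                            (Br (sup_2_13 (V \<alpha> \<beta> \<gamma> r)) (Z r' 1)) :: 'k::field lie)"
proof -
  have "lie_eq g 3 (Br (sup_1_23 (V \<alpha> \<beta> \<gamma> r')) (Z r 2))
      (contract \<alpha> \<beta> \<gamma> r' (\<lambda>p q. Br (W 1 p q) (Z r 2)) :: 'k lie)"
    unfolding sup_1_23_def using d preim_coface by (intro br_up_V) simp_all
  also have "lie_eq g 3 ... (contract \<alpha> \<beta> \<gamma> r' (\<lambda>p q. Br (T 1 2) (Z_iprod r p q 1)))"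
    using abc r by (intro contract_cong br_W1_Z2) auto
  also have "lie_eq g 3 ... (contract \<alpha> \<beta> \<gamma> r (\<lambda>p q. Smul (-1) (Br (T 1 2) (Z_iprod r' p q 1))))"
    by (rule lie_eq_if_coeffs_eq) (simp add: contract_def Z_iprod_def algebra_simps)
  also have "lie_eq g 3 ... (contract \<alpha> \<beta> \<gamma> r (\<lambda>p q. Br (W 2 p q) (Z r' 1)))"
    using g abc r by (intro contract_cong lie_eq.sym[OF br_W2_Z1])
  also have "lie_eq g 3 ... (Br (sup_2_13 (V \<alpha> \<beta> \<gamma> r)) (Z r' 1))"
    unfolding sup_2_13_def using d preim_coface by (intro lie_eq.sym[OF br_up_V]) simp_all
  finally show ?thesis
    by simp
qed

text \<open>Expansion of \<open>x\<close> in the symplectic basis, \<open>x = \<Sum>\<^sub>i \<langle>x,a\<^sub>i\<rangle> b\<^sub>i - \<langle>x,b\<^sub>i\<rangle> a\<^sub>i\<close>,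
  pushed through a map \<open>F\<close>.\<close>

lemma lsum_symplectic_expansion:
  assumes "x \<in> cls_set g"
  shows "lie_eq g n (lsum (map (\<lambda>i. Sub (Smul (of_int (pair (A i) x)) (F (B i)))
                                          (Smul (of_int (pair (B i) x)) (F (A i)))) [1..<g+1]))
           (Smul (-1) (F x))"
proof -
  obtain k where k: "k \<in> {1..g}" "x = A k \<or> x = B k"
    using assms by (auto simp: cls_set_iff)
  let ?term = "\<lambda>i. Sub (Smul (of_int (pair (A i) x)) (F (B i))) (Smul (of_int (pair (B i) x)) (F (A i)))"
  have "lie_eq g n (lsum (map ?term [1..<g+1])) (?term k)"
    using k by (intro lie_eq_lsum_single) (auto intro!: lie_eq_if_coeffs_eq)
  also have "lie_eq g n (?term k) (Smul (-1) (F x))"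
    using k by (intro lie_eq_if_coeffs_eq) auto
  finally show ?thesis .
qed

lemma br_sup_1_23_V_Z1:
  assumes "distinct [\<alpha>, \<beta>, \<gamma>]" and "y \<in> cls_set g"
  shows "lie_eq g 3 (Br (sup_1_23 (V \<alpha> \<beta> \<gamma> c)) (Z y 1))
           (contract \<alpha> \<beta> \<gamma> c (\<lambda>p q. Br (Br (Z p 1) (Z q 1)) (Z y 1)) :: 'k::field lie)"
proof -
  have "lie_eq g 3 (Br (sup_1_23 (V \<alpha> \<beta> \<gamma> c)) (Z y 1))
      (contract \<alpha> \<beta> \<gamma> c (\<lambda>p q. Br (W 1 p q) (Z y 1)) :: 'k lie)"
    unfolding sup_1_23_def using assms(1) preim_coface by (intro br_up_V) simp_all
  also have "lie_eq g 3 ... (contract \<alpha> \<beta> \<gamma> c (\<lambda>p q. Br (Br (Z p 1) (Z q 1)) (Z y 1)))"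
    using assms(2) by (intro contract_cong br_W1_Z1) auto
  finally show ?thesis .
qed

lemma V_bracket_sum:
  assumes d: "distinct [\<alpha>, \<beta>, \<gamma>]" and abc: "\<alpha> \<in> cls_set g" "\<beta> \<in> cls_set g" "\<gamma> \<in> cls_set g"
  shows "lie_zero g 3 (lsum (map (\<lambda>i. Sub (Br (sup_1_23 (V \<alpha> \<beta> \<gamma> (A i))) (Y i 1))
                                           (Br (sup_1_23 (V \<alpha> \<beta> \<gamma> (B i))) (X i 1))) [1..<g+1])
                       :: 'k::field lie)"
proof -
  let ?J = "\<lambda>p q x. Br (Br (Z p 1) (Z q 1)) (Z x 1) :: 'k lie"
  let ?term = "\<lambda>p q x i. Sub (Smul (of_int (pair (A i) x)) (?J p q (B i)))
                              (Smul (of_int (pair (B i) x)) (?J p q (A i)))"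
  let ?L = "[1..<g+1]"
  have "lie_eq g 3 (lsum (map (\<lambda>i. Sub (Br (sup_1_23 (V \<alpha> \<beta> \<gamma> (A i))) (Y i 1))
                                      (Br (sup_1_23 (V \<alpha> \<beta> \<gamma> (B i))) (X i 1))) ?L))
      (lsum (map (\<lambda>i. Add (?term \<beta> \<gamma> \<alpha> i) (Add (Smul (-1) (?term \<alpha> \<gamma> \<beta> i)) (?term \<alpha> \<beta> \<gamma> i))) ?L))"
  proof (rule lie_eq_lsum_cong)
    fix i assume "i \<in> set ?L"
    then have "A i \<in> cls_set g" "B i \<in> cls_set g"
      by (auto simp: cls_set_def)
    with d have "lie_eq g 3 (Br (sup_1_23 (V \<alpha> \<beta> \<gamma> (A i))) (Z (B i) 1))
        (contract \<alpha> \<beta> \<gamma> (A i) (\<lambda>p q. ?J p q (B i)))"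
      "lie_eq g 3 (Br (sup_1_23 (V \<alpha> \<beta> \<gamma> (B i))) (Z (A i) 1))
        (contract \<alpha> \<beta> \<gamma> (B i) (\<lambda>p q. ?J p q (A i)))"
      by (simp_all only: br_sup_1_23_V_Z1)
    then show "lie_eq g 3 (Sub (Br (sup_1_23 (V \<alpha> \<beta> \<gamma> (A i))) (Y i 1))
        (Br (sup_1_23 (V \<alpha> \<beta> \<gamma> (B i))) (X i 1)))
        (Add (?term \<beta> \<gamma> \<alpha> i) (Add (Smul (-1) (?term \<alpha> \<gamma> \<beta> i)) (?term \<alpha> \<beta> \<gamma> i)))"
      by (intro lie_eq_by_coeffs[where rs = "[
            Sub (Br (sup_1_23 (V \<alpha> \<beta> \<gamma> (A i))) (Y i 1)) (contract \<alpha> \<beta> \<gamma> (A i) (\<lambda>p q. ?J p q (B i))),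
            Smul (-1) (Sub (Br (sup_1_23 (V \<alpha> \<beta> \<gamma> (B i))) (X i 1)) (contract \<alpha> \<beta> \<gamma> (B i) (\<lambda>p q. ?J p q (A i))))]"])
         (simp_all add: contract_def algebra_simps)
  qed
  also have "lie_eq g 3 ... (Add (lsum (map (?term \<beta> \<gamma> \<alpha>) ?L))
      (Add (Smul (-1) (lsum (map (?term \<alpha> \<gamma> \<beta>) ?L))) (lsum (map (?term \<alpha> \<beta> \<gamma>) ?L))))"
    by (rule lie_eq.trans[OF lie_eq_lsum_add lie_eq.cong_add[OF lie_eq.refl
          lie_eq.trans[OF lie_eq_lsum_add lie_eq.cong_add[OF lie_eq_lsum_smul lie_eq.refl]]]])
  also have "lie_eq g 3 ... (Add (Smul (-1) (?J \<beta> \<gamma> \<alpha>))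
      (Add (Smul (-1) (Smul (-1) (?J \<alpha> \<gamma> \<beta>))) (Smul (-1) (?J \<alpha> \<beta> \<gamma>))))"
    using abc by (intro lie_eq.cong_add lie_eq.cong_smul lsum_symplectic_expansion)
  also have "lie_eq g 3 ... Zero"
    by (rule lie_eq_by_coeffs[where rs = "[
          Smul (-1) (Add (?J \<beta> \<gamma> \<alpha>) (Add (?J \<gamma> \<alpha> \<beta>) (?J \<alpha> \<beta> \<gamma>))),
          Br (Add (Br (Z \<alpha> 1) (Z \<gamma> 1)) (Br (Z \<gamma> 1) (Z \<alpha> 1))) (Z \<beta> 1)]"])
       (simp_all add: lie_zero_jacobi_left)
  finally show ?thesis .
qed

theorem lemma11p10:
  fixes g :: nat and \<alpha> \<beta> \<gamma> :: cls
  assumes "g \<ge> 2"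
    and "\<alpha> \<in> cls_set g" and "\<beta> \<in> cls_set g" and "\<gamma> \<in> cls_set g"
    and "distinct [\<alpha>, \<beta>, \<gamma>]"
  shows "in_Z g (V \<alpha> \<beta> \<gamma> :: cls \<Rightarrow> 'k::field_char_0 lie)"
proof -
  have handles: "A i \<in> cls_set g" "B i \<in> cls_set g" if "i \<in> {1..g}" for i
    using that by (auto simp: cls_set_def)
  have mixed: "lie_zero g 3 (Sub (Br (sup_1_23 (V \<alpha> \<beta> \<gamma> r')) (Z r 2))
      (Br (sup_2_13 (V \<alpha> \<beta> \<gamma> r)) (Z r' 1)) :: 'k lie)" if "r \<in> cls_set g" "r' \<in> cls_set g" for r r'
    using assms that by (intro V_mixed_brackets)
  show ?thesis
    unfolding in_Z_def
  proof (intro conjI ballI impI)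
    fix c assume "c \<in> cls_set g"
    show "wf g 2 (V \<alpha> \<beta> \<gamma> c :: 'k lie)"
      using assms by (intro wf_V) auto
    show "\<exists>u. wf g 1 u \<and> lie_eq g 2 (sup_12 u) (Add (sup_1_2 (V \<alpha> \<beta> \<gamma> c)) (sup_2_1 (V \<alpha> \<beta> \<gamma> c :: 'k lie)))"
      using assms by (intro exI[of _ "V \<alpha> \<beta> \<gamma> c"] conjI wf_V V_sup_12) auto
    show "lie_zero g 3 (Sub (Sub (sup_12_3 (V \<alpha> \<beta> \<gamma> c)) (sup_1_23 (V \<alpha> \<beta> \<gamma> c))) (sup_2_13 (V \<alpha> \<beta> \<gamma> c :: 'k lie)))"
      using assms by (intro V_sup_12_3)
  next
    fix i j assume "i \<in> {1..g}" "j \<in> {1..g}"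
    with mixed[of "B j" "A i"] mixed[of "A j" "A i"] mixed[of "B j" "B i"] handles
    show "lie_zero g 3 (Sub (Br (sup_1_23 (V \<alpha> \<beta> \<gamma> (A i))) (Y j 2)) (Br (sup_2_13 (V \<alpha> \<beta> \<gamma> (B j) :: 'k lie)) (X i 1)))"
      "lie_zero g 3 (Sub (Br (sup_1_23 (V \<alpha> \<beta> \<gamma> (A i))) (X j 2)) (Br (sup_2_13 (V \<alpha> \<beta> \<gamma> (A j) :: 'k lie)) (X i 1)))"
      "lie_zero g 3 (Sub (Br (sup_1_23 (V \<alpha> \<beta> \<gamma> (B i))) (Y j 2)) (Br (sup_2_13 (V \<alpha> \<beta> \<gamma> (B j) :: 'k lie)) (Y i 1)))"
      by simp_all
  next
    show "lie_zero g 3 (lsum (map (\<lambda>i. Sub (Br (sup_1_23 (V \<alpha> \<beta> \<gamma> (A i))) (Y i 1))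
                                      (Br (sup_1_23 (V \<alpha> \<beta> \<gamma> (B i) :: 'k lie)) (X i 1))) [1..<g+1]))"
      using assms by (intro V_bracket_sum)
  qed
qed

end
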